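(* In the setting of the context, for all tuples $(T,L)\in\{1,\ldots,L\}\times\mathbb N_+$ and any $u_{\mathrm{cut}}\in\{1,\ldots,p-1\}$, $$\widehat V'^{\,+}_{T,L}(0.5,\rho_{\mathrm{thr}}(u_{\mathrm{cut}}+1))\le\widehat V'^{\,+}_{T,L}(0.5,\rho_{\mathrm{thr}}(u_{\mathrm{cut}})).$$
   Context: Data: $\boldsymbol X=[\boldsymbol x_1\cdots\boldsymbol x_p]\in\mathbb R^{n\times p}$ with standardized columns, $\boldsymbol y\in\mathbb R^n$. T-Rex framework: fix $K,L\ge1$; for $k=1,\ldots,K$ append a dummy matrix $\mathring{\boldsymbol X}_k\in\mathbb R^{n\times L}$ (i.i.d. entries from a univariate distribution with finite mean and variance), run a forward selection method (at most one variable per iteration) on $(\boldsymbol y,[\boldsymbol X\ \mathring{\boldsymbol X}_k])$ and terminate once $t$ dummies are included, $t\in\{1,\ldots,L\}$; $\mathcal C_{k,L}(t)$ = original variables included before termination; $\Phi_{t,L}(j)=\frac1K\sum_k\mathbb 1\{j\in\mathcal C_{k,L}(t)\}$. Dendrogram groups: with $\rho_{j,j'}=\boldsymbol x_j^\top\boldsymbol x_{j'}$, agglomerative hierarchical clustering with distance $1-|\rho|$ (single, complete, or average linkage) gives merge heights $c_1\ge\cdots\ge c_{p-1}$; set $c_0=1$, $c_p=0$, $\rho_{\mathrm{thr}}(u)=1-c_u$ for $u=1,\ldots,p$; $\mathrm{Gr}(j,\rho_{\mathrm{thr}}(u_{\mathrm{cut}}))$ is the set of $j'\neq j$ in the same cluster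 as $j$ when the dendrogram is cut at distance $1-\rho_{\mathrm{thr}}(u_{\mathrm{cut}})$. For $t\in\{1,\ldots,T\}$ define $\Psi^+_{t,L}(j,\rho)=\big(2-\min_{j'\in\mathrm{Gr}(j,\rho)}|\Phi_{T,L}(j)-\Phi_{T,L}(j')|\big)^{-1}$ if $\mathrm{Gr}(j,\rho)\ne\varnothing$ and $\Psi^+_{t,L}(j,\rho)=1$ otherwise, and $$\widehat V'^{\,+}_{T,L}(0.5,\rho)=\sum_{t=1}^T\frac{p-\sum_{q=1}^p\Psi^+_{t,L}(q,\rho)\cdot\Phi_{t,L}(q)}{L-(t-1)}.$$ *)

theory Defs
  imports Complex_Main
begin

text \<open>Design matrix X with rows i < n and columns j in 1..p.\<close>

definition col_standardized :: "nat \<Rightarrow> (nat \<Rightarrow> nat \<Rightarrow> real) \<Rightarrow> nat \<Rightarrow> bool" where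
  "col_standardized n X j \<longleftrightarrow> (\<Sum>i<n. X i j) = 0 \<and> (\<Sum>i<n. (X i j)^2) = 1"

definition corr :: "nat \<Rightarrow> (nat \<Rightarrow> nat \<Rightarrow> real) \<Rightarrow> nat \<Rightarrow> nat \<Rightarrow> real" where
  "corr n X j j' = (\<Sum>i<n. X i j * X i j')"

definition corr_dist :: "nat \<Rightarrow> (nat \<Rightarrow> nat \<Rightarrow> real) \<Rightarrow> nat \<Rightarrow> nat \<Rightarrow> real" where
  "corr_dist n X j j' = 1 - \<bar>corr n X j j'\<bar>"

text \<open>A forward-selection path on [X, dummies] is the list of variables in the order
  they are included (one per iteration). Original variables are 1..p, dummies p+1..p+L.
  The run is terminated once t dummies are included.\<close>

fun stop_at_dummies :: "nat \<Rightarrow> nat \<Rightarrow> nat list \<Rightarrow> nat list" where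
  "stop_at_dummies p t [] = []"
| "stop_at_dummies p t (x # xs) =
     (if p < x then (if t \<le> 1 then [x] else x # stop_at_dummies p (t - 1) xs)
      else x # stop_at_dummies p t xs)"

definition trex_C :: "nat \<Rightarrow> nat list \<Rightarrow> nat \<Rightarrow> nat set" where
  "trex_C p path t = {j \<in> set (stop_at_dummies p t path). 1 \<le> j \<and> j \<le> p}"

definition valid_path :: "nat \<Rightarrow> nat \<Rightarrow> nat list \<Rightarrow> bool" where
  "valid_path p L path \<longleftrightarrow> distinct path \<and> set path \<subseteq> {1..p + L}"

definition trex_Phi :: "nat \<Rightarrow> nat \<Rightarrow> (nat \<Rightarrow> nat list) \<Rightarrow> nat \<Rightarrow> nat \<Rightarrow> real" where
  "trex_Phi K p paths t j = (1 / real K) * (\<Sum>k = 1..K. if j \<in> trex_C p (paths k) t then 1 else 0)"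

datatype linkage = Single | Complete | Average

definition linkage_dist :: "linkage \<Rightarrow> (nat \<Rightarrow> nat \<Rightarrow> real) \<Rightarrow> nat set \<Rightarrow> nat set \<Rightarrow> real" where
  "linkage_dist lk d A B = (case lk of
      Single \<Rightarrow> Min {d a b | a b. a \<in> A \<and> b \<in> B}
    | Complete \<Rightarrow> Max {d a b | a b. a \<in> A \<and> b \<in> B}
    | Average \<Rightarrow> (\<Sum>a\<in>A. \<Sum>b\<in>B. d a b) / (real (card A) * real (card B)))"

definition agg_step :: "linkage \<Rightarrow> (nat \<Rightarrow> nat \<Rightarrow> real) \<Rightarrow> nat set set \<Rightarrow> nat set set \<Rightarrow> real \<Rightarrow> bool" where
  "agg_step lk d P P' h \<longleftrightarrow> (\<exists>A B. A \<in> P \<and> B \<in> P \<and> A \<noteq> B \<and>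
      h = linkage_dist lk d A B \<and>
      (\<forall>A'\<in>P. \<forall>B'\<in>P. A' \<noteq> B' \<longrightarrow> h \<le> linkage_dist lk d A' B') \<and>
      P' = insert (A \<union> B) (P - {A, B}))"

text \<open>A full run on variables 1..p: Pseq i is the partition after i merges,
  hs i the height of merge number i+1 (in the order of the algorithm), i < p-1.\<close>
definition agg_run :: "linkage \<Rightarrow> (nat \<Rightarrow> nat \<Rightarrow> real) \<Rightarrow> nat \<Rightarrow> (nat \<Rightarrow> nat set set) \<Rightarrow> (nat \<Rightarrow> real) \<Rightarrow> bool" where
  "agg_run lk d p Pseq hs \<longleftrightarrow> Pseq 0 = {{j} | j. j \<in> {1..p}} \<and>
      (\<forall>i < p - 1. agg_step lk d (Pseq i) (Pseq (Suc i)) (hs i))"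

definition dend_c :: "nat \<Rightarrow> (nat \<Rightarrow> real) \<Rightarrow> nat \<Rightarrow> real" where
  "dend_c p hs u = (if u = 0 then 1 else if p \<le> u then 0
                    else rev (sort (map hs [0..<p - 1])) ! (u - 1))"

definition rho_thr :: "nat \<Rightarrow> (nat \<Rightarrow> real) \<Rightarrow> nat \<Rightarrow> real" where
  "rho_thr p hs u = 1 - dend_c p hs u"

text \<open>Cutting the dendrogram at distance delta: perform all merges of height \<le> delta.\<close>
definition cut_partition :: "nat \<Rightarrow> (nat \<Rightarrow> nat set set) \<Rightarrow> (nat \<Rightarrow> real) \<Rightarrow> real \<Rightarrow> nat set set" where
  "cut_partition p Pseq hs \<delta> = Pseq (card {i. i < p - 1 \<and> hs i \<le> \<delta>})"

definition Gr :: "nat \<Rightarrow> (nat \<Rightarrow> nat set set) \<Rightarrow> (nat \<Rightarrow> real) \<Rightarrow> nat \<Rightarrow> real \<Rightarrow> nat set" where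
  "Gr p Pseq hs j \<rho> = {j'. j' \<noteq> j \<and> (\<exists>Cl \<in> cut_partition p Pseq hs (1 - \<rho>). j \<in> Cl \<and> j' \<in> Cl)}"

definition Psi_plus :: "(nat \<Rightarrow> real) \<Rightarrow> nat set \<Rightarrow> nat \<Rightarrow> real" where
  "Psi_plus PhiT G j = (if G = {} then 1
      else 1 / (2 - Min {\<bar>PhiT j - PhiT j'\<bar> | j'. j' \<in> G}))"

definition V_hat_plus :: "nat \<Rightarrow> nat \<Rightarrow> (nat \<Rightarrow> nat list) \<Rightarrow> nat \<Rightarrow> nat \<Rightarrow>
    (nat \<Rightarrow> nat set set) \<Rightarrow> (nat \<Rightarrow> real) \<Rightarrow> real \<Rightarrow> real" where
  "V_hat_plus K p paths T L Pseq hs \<rho> =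
     (\<Sum>t = 1..T. (real p - (\<Sum>q = 1..p.
         Psi_plus (trex_Phi K p paths T) (Gr p Pseq hs q \<rho>) q * trex_Phi K p paths t q))
       / (real L - (real t - 1)))"

end

theory Submission
  imports Defs
begin

text \<open>Raising the index u of the threshold rho_thr u lowers the cut distance c_u of the
  dendrogram (merge heights are nonnegative, since 1 - |rho| \<ge> 0 for standardized columns).
  Cutting lower yields a finer partition, so every group Gr(j, rho) shrinks. The minimum in
  Psi^+ is then taken over fewer values in [0, 1], so Psi^+ grows, and since Phi \<ge> 0 every
  summand of the estimator decreases.\<close>

lemma trex_Phi_eq_card:
  "trex_Phi K p paths t j = real (card {k \<in> {1..K}. j \<in> trex_C p (paths k) t}) / real K"
  unfolding trex_Phi_def by (simp add: sum.If_cases Int_def)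

lemma trex_Phi_bounds:
  assumes "K \<ge> 1"
  shows "0 \<le> trex_Phi K p paths t j \<and> trex_Phi K p paths t j \<le> 1"
proof -
  have "card {k \<in> {1..K}. j \<in> trex_C p (paths k) t} \<le> card {1..K}"
    by (rule card_mono) auto
  then show ?thesis
    using assms by (simp add: trex_Phi_eq_card)
qed

lemma finite_range_trex_Phi: "finite (range (trex_Phi K p paths t))"
proof (rule finite_subset)
  show "range (trex_Phi K p paths t) \<subseteq> (\<lambda>A. real (card A) / real K) ` Pow {1..K}"
    by (auto simp: trex_Phi_eq_card)
qed simp

lemma Psi_plus_nonempty:
  "G \<noteq> {} \<Longrightarrow> Psi_plus f G j = 1 / (2 - Min ((\<lambda>j'. \<bar>f j - f j'\<bar>) ` G))"
  unfolding Psi_plus_def by (simp add: Setcompr_eq_image)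

lemma Psi_plus_antimono:
  fixes f :: "nat \<Rightarrow> real"
  assumes "G \<subseteq> G'" and f_bounds: "\<And>j. 0 \<le> f j \<and> f j \<le> 1" and "finite (range f)"
  shows "Psi_plus f G' j \<le> Psi_plus f G j"
proof -
  define D where "D G = (\<lambda>j'. \<bar>f j - f j'\<bar>) ` G" for G
  have D_finite: "finite (D G)" for G
    using \<open>finite (range f)\<close>
    by (rule finite_subset[rotated, OF finite_imageI]) (auto simp: D_def)
  have D_bounds: "\<forall>x \<in> D G. 0 \<le> x \<and> x \<le> 1" for G
  proof -
    have "\<bar>f j - f j'\<bar> \<le> 1" for j'
      using f_bounds[of j] f_bounds[of j'] by arith
    then show ?thesis by (auto simp: D_def)
  qed
  have Min_bounds: "0 \<le> Min (D G) \<and> Min (D G) \<le> 1" if "G \<noteq> {}" for G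
  proof -
    have "Min (D G) \<in> D G"
      using that D_finite by (intro Min_in) (auto simp: D_def)
    then show ?thesis using D_bounds by blast
  qed
  show ?thesis
  proof (cases "G = {}")
    case True
    show ?thesis
    proof (cases "G' = {}")
      case False
      then have "Psi_plus f G' j = 1 / (2 - Min (D G'))"
        by (simp add: Psi_plus_nonempty D_def)
      also have "\<dots> \<le> 1"
        using Min_bounds[OF False] by simp
      finally show ?thesis
        using True by (simp add: Psi_plus_def)
    qed (simp add: True Psi_plus_def)
  next
    case False
    with \<open>G \<subseteq> G'\<close> have "Min (D G') \<le> Min (D G)"
      by (intro Min_antimono D_finite) (auto simp: D_def)
    then have "1 / (2 - Min (D G')) \<le> 1 / (2 - Min (D G))"
      using Min_bounds[OF False] by (intro divide_left_mono) auto
    moreover have "G' \<noteq> {}"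
      using False \<open>G \<subseteq> G'\<close> by auto
    ultimately show ?thesis
      using False by (simp add: Psi_plus_nonempty D_def)
  qed
qed

lemma agg_step_refines:
  assumes "agg_step lk d P P' h" and "C \<in> P"
  shows "\<exists>C' \<in> P'. C \<subseteq> C'"
proof -
  obtain A B where "P' = insert (A \<union> B) (P - {A, B})"
    using \<open>agg_step lk d P P' h\<close> unfolding agg_step_def by blast
  then show ?thesis
    using \<open>C \<in> P\<close> by (cases "C = A \<or> C = B") auto
qed

lemma agg_run_refines:
  assumes run: "agg_run lk d p Pseq hs" and "m \<le> m'" and "m' \<le> p - 1" and "C \<in> Pseq m"
  shows "\<exists>C' \<in> Pseq m'. C \<subseteq> C'"
  using \<open>m \<le> m'\<close> \<open>m' \<le> p - 1\<close>
proof (induction m' rule: dec_induct)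
  case base
  then show ?case using \<open>C \<in> Pseq m\<close> by blast
next
  case (step i)
  then obtain C' where "C' \<in> Pseq i" "C \<subseteq> C'" by auto
  moreover have "agg_step lk d (Pseq i) (Pseq (Suc i)) (hs i)"
    using run step.prems unfolding agg_run_def by auto
  ultimately show ?case
    using agg_step_refines by (meson order_trans)
qed

lemma agg_run_clusters:
  assumes run: "agg_run lk d p Pseq hs"
  shows "i \<le> p - 1 \<Longrightarrow> C \<in> Pseq i \<Longrightarrow> C \<noteq> {} \<and> C \<subseteq> {1..p}"
proof (induction i arbitrary: C)
  case 0
  then show ?case using run unfolding agg_run_def by auto
next
  case (Suc i)
  then have "agg_step lk d (Pseq i) (Pseq (Suc i)) (hs i)"
    using run unfolding agg_run_def by auto
  then obtain A B where "A \<in> Pseq i" "B \<in> Pseq i"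
    and "Pseq (Suc i) = insert (A \<union> B) (Pseq i - {A, B})"
    unfolding agg_step_def by blast
  with Suc show ?case
    by auto
qed

lemma linkage_dist_nonneg:
  assumes "finite A" "finite B" "A \<noteq> {}" "B \<noteq> {}"
    and nonneg: "\<And>a b. a \<in> A \<Longrightarrow> b \<in> B \<Longrightarrow> 0 \<le> d a b"
  shows "0 \<le> linkage_dist lk d A B"
proof -
  define S where "S = {d a b | a b. a \<in> A \<and> b \<in> B}"
  have "S = (\<lambda>(a, b). d a b) ` (A \<times> B)"
    unfolding S_def by auto
  then have "finite S" "S \<noteq> {}"
    using assms(1-4) by auto
  moreover have "\<forall>x \<in> S. 0 \<le> x"
    unfolding S_def using nonneg by blast
  ultimately have "0 \<le> Min S" "0 \<le> Max S"
    using Min_in[of S] Max_in[of S] by auto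
  moreover have "0 \<le> (\<Sum>a\<in>A. \<Sum>b\<in>B. d a b)"
    using nonneg by (intro sum_nonneg) auto
  ultimately show ?thesis
    by (cases lk) (simp_all add: linkage_dist_def S_def[symmetric])
qed

lemma agg_run_heights_nonneg:
  assumes run: "agg_run lk d p Pseq hs" and "i < p - 1"
    and nonneg: "\<And>a b. a \<in> {1..p} \<Longrightarrow> b \<in> {1..p} \<Longrightarrow> 0 \<le> d a b"
  shows "0 \<le> hs i"
proof -
  have "agg_step lk d (Pseq i) (Pseq (Suc i)) (hs i)"
    using run \<open>i < p - 1\<close> unfolding agg_run_def by blast
  then obtain A B where AB: "A \<in> Pseq i" "B \<in> Pseq i" "hs i = linkage_dist lk d A B"
    unfolding agg_step_def by (elim exE conjE) (rule that)
  have "i \<le> p - 1"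
    using \<open>i < p - 1\<close> by simp
  then have "A \<noteq> {} \<and> A \<subseteq> {1..p}" "B \<noteq> {} \<and> B \<subseteq> {1..p}"
    using agg_run_clusters[OF run] AB(1,2) by blast+
  then show ?thesis
    unfolding AB(3) by (intro linkage_dist_nonneg nonneg) (auto intro: finite_subset)
qed

lemma corr_dist_nonneg:
  assumes "col_standardized n X a" "col_standardized n X b"
  shows "0 \<le> corr_dist n X a b"
proof -
  have "\<bar>corr n X a b\<bar> \<le> (\<Sum>i<n. \<bar>X i a * X i b\<bar>)"
    unfolding corr_def by (rule sum_abs)
  also have "\<dots> \<le> (\<Sum>i<n. ((X i a)\<^sup>2 + (X i b)\<^sup>2) / 2)"
  proof (rule sum_mono)
    fix i
    have "0 \<le> (\<bar>X i a\<bar> - \<bar>X i b\<bar>)\<^sup>2" by simp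
    then show "\<bar>X i a * X i b\<bar> \<le> ((X i a)\<^sup>2 + (X i b)\<^sup>2) / 2"
      by (simp add: power2_eq_square abs_mult algebra_simps)
  qed
  also have "\<dots> = ((\<Sum>i<n. (X i a)\<^sup>2) + (\<Sum>i<n. (X i b)\<^sup>2)) / 2"
    by (simp add: sum_divide_distrib[symmetric] sum.distrib)
  also have "\<dots> = 1"
    using assms unfolding col_standardized_def by simp
  finally show ?thesis
    unfolding corr_dist_def by simp
qed

lemma dend_c_Suc_le:
  assumes nonneg: "\<And>i. i < p - 1 \<Longrightarrow> 0 \<le> hs i" and "0 < u"
  shows "dend_c p hs (Suc u) \<le> dend_c p hs u"
proof -
  define xs where "xs = rev (sort (map hs [0..<p - 1]))"
  have "sorted_wrt (\<ge>) xs" "length xs = p - 1"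
    unfolding xs_def by (simp_all add: sorted_wrt_rev)
  show ?thesis
  proof (cases "Suc u < p")
    case True
    then have "xs ! u \<le> xs ! (u - 1)"
      using sorted_wrt_nth_less[OF \<open>sorted_wrt (\<ge>) xs\<close>, of "u - 1" u] \<open>length xs = p - 1\<close> \<open>0 < u\<close>
      by auto
    with True \<open>0 < u\<close> show ?thesis
      unfolding dend_c_def xs_def by auto
  next
    case False
    have "u < p \<Longrightarrow> xs ! (u - 1) \<in> hs ` {0..<p - 1}"
      using \<open>length xs = p - 1\<close> \<open>0 < u\<close> nth_mem[of "u - 1" xs] by (auto simp: xs_def)
    with False nonneg show ?thesis
      unfolding dend_c_def xs_def by auto
  qed
qed

lemma cut_partition_refines:
  assumes "agg_run lk d p Pseq hs" and "\<delta> \<le> \<delta>'" and "C \<in> cut_partition p Pseq hs \<delta>"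
  shows "\<exists>C' \<in> cut_partition p Pseq hs \<delta>'. C \<subseteq> C'"
proof -
  let ?m = "\<lambda>\<delta>. card {i. i < p - 1 \<and> hs i \<le> \<delta>}"
  have "?m \<delta> \<le> ?m \<delta>'"
    using \<open>\<delta> \<le> \<delta>'\<close> by (intro card_mono) auto
  moreover have "?m \<delta>' \<le> p - 1"
    using card_mono[of "{..<p - 1}" "{i. i < p - 1 \<and> hs i \<le> \<delta>'}"] by auto
  ultimately show ?thesis
    using agg_run_refines[OF assms(1)] assms(3) unfolding cut_partition_def by simp
qed

lemma Gr_antimono:
  assumes "agg_run lk d p Pseq hs" and "\<rho>' \<le> \<rho>"
  shows "Gr p Pseq hs j \<rho> \<subseteq> Gr p Pseq hs j \<rho>'"
proof
  fix j' assume "j' \<in> Gr p Pseq hs j \<rho>"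
  then obtain C where "j' \<noteq> j" "C \<in> cut_partition p Pseq hs (1 - \<rho>)" "j \<in> C" "j' \<in> C"
    unfolding Gr_def by blast
  moreover obtain C' where "C' \<in> cut_partition p Pseq hs (1 - \<rho>')" "C \<subseteq> C'"
    using cut_partition_refines[OF assms(1) _ \<open>C \<in> cut_partition p Pseq hs (1 - \<rho>)\<close>, of "1 - \<rho>'"]
      \<open>\<rho>' \<le> \<rho>\<close> by auto
  ultimately show "j' \<in> Gr p Pseq hs j \<rho>'"
    unfolding Gr_def by blast
qed

lemma V_hat_plus_antimono:
  assumes "agg_run lk d p Pseq hs" and "K \<ge> 1" and "T \<le> L" and "\<rho>' \<le> \<rho>"
  shows "V_hat_plus K p paths T L Pseq hs \<rho> \<le> V_hat_plus K p paths T L Pseq hs \<rho>'"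
  unfolding V_hat_plus_def
proof (rule sum_mono)
  fix t assume "t \<in> {1..T}"
  then have "0 < real L - (real t - 1)"
    using \<open>T \<le> L\<close> by auto
  moreover have "Psi_plus (trex_Phi K p paths T) (Gr p Pseq hs q \<rho>') q
      \<le> Psi_plus (trex_Phi K p paths T) (Gr p Pseq hs q \<rho>) q" for q
    using Gr_antimono[OF assms(1,4)] trex_Phi_bounds[OF \<open>K \<ge> 1\<close>] finite_range_trex_Phi
    by (rule Psi_plus_antimono)
  ultimately show "(real p - (\<Sum>q = 1..p. Psi_plus (trex_Phi K p paths T) (Gr p Pseq hs q \<rho>) q
        * trex_Phi K p paths t q)) / (real L - (real t - 1))
      \<le> (real p - (\<Sum>q = 1..p. Psi_plus (trex_Phi K p paths T) (Gr p Pseq hs q \<rho>') q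
        * trex_Phi K p paths t q)) / (real L - (real t - 1))"
    using trex_Phi_bounds[OF \<open>K \<ge> 1\<close>]
    by (intro divide_right_mono diff_left_mono sum_mono mult_right_mono) auto
qed

theorem lemma3:
  fixes n p K L T u_cut :: nat
    and X :: "nat \<Rightarrow> nat \<Rightarrow> real"
    and lk :: linkage
    and Pseq :: "nat \<Rightarrow> nat set set"
    and hs :: "nat \<Rightarrow> real"
    and paths :: "nat \<Rightarrow> nat list"
  assumes "\<forall>j \<in> {1..p}. col_standardized n X j"
    and "K \<ge> 1" and "L \<ge> 1" and "1 \<le> T" and "T \<le> L"
    and "\<forall>k \<in> {1..K}. valid_path p L (paths k)"
    and "agg_run lk (corr_dist n X) p Pseq hs"
    and "1 \<le> u_cut" and "u_cut \<le> p - 1"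
  shows "V_hat_plus K p paths T L Pseq hs (rho_thr p hs (u_cut + 1))
           \<le> V_hat_plus K p paths T L Pseq hs (rho_thr p hs u_cut)"
proof -
  have "0 \<le> hs i" if "i < p - 1" for i
    using assms(7) that
    by (rule agg_run_heights_nonneg) (use assms(1) corr_dist_nonneg in auto)
  then have "dend_c p hs (Suc u_cut) \<le> dend_c p hs u_cut"
    using \<open>1 \<le> u_cut\<close> by (intro dend_c_Suc_le) auto
  then have "rho_thr p hs u_cut \<le> rho_thr p hs (u_cut + 1)"
    unfolding rho_thr_def by simp
  then show ?thesis
    using assms(2,5,7) by (intro V_hat_plus_antimono)
qed

end
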